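(* Let $\mathcal{X}$ be a family of subsets of $[d]$. Consider any two runs of the refinement procedure starting from $\mathrm{val}^1_{\mathcal{X}}=\mathrm{val}_{\mathcal{X}}$ (possibly making different choices of subsets at each step) which both reach a stationary function, i.e. some $\mathrm{val}^{n}$ with $\mathrm{val}^{n+1}=\mathrm{val}^{n}$. Then the two stationary functions coincide; in other words, $v_{\mathcal{X}}$ does not depend on the choices made.
   Context: A proper $\mathcal{X}$-sequence is a sequence $\mathcal{S}=(X_1,\dots,X_k)$ ($k\ge0$) of members of $\mathcal{X}$ with $X_i\not\subseteq\bigcup_{j<i}X_j$ for $i=2,\dots,k$. For $F\subseteq[d]$, $\mathrm{val}(F,\mathcal{S})=|F\cup\bigcup_{i=1}^kX_i|-k$ and $\mathrm{val}_{\mathcal{X}}(F)=\min_{\mathcal{S}}\mathrm{val}(F,\mathcal{S})$ over proper $\mathcal{X}$-sequences. Refinement procedure: given $\mathrm{val}^n:2^{[d]}\to\mathbb{Z}$, define $\mathrm{val}^{n+1}$ as follows. (i) If there are $A,B\subseteq[d]$ and $x\in\mathcal{X}$ with $A\cap B\subseteq x$ and $\mathrm{val}^n(A\cup B)>\mathrm{val}^n(A)+\mathrm{val}^n(B)-\min\{|A\cap B|,|x|-1\}$, choose one such and set $\mathrm{val}^{n+1}(A\cup B)$ equal to the right-hand side, leaving all other values unchanged. (ii) Otherwise, if there are $A\subsetneq B$ with $\mathrm{val}^n(A)>\mathrm{val}^n(B)$, choose one and set $\mathrm{val}^{n+1}(A)=\mathrm{val}^n(B)$, others unchanged. (iii)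 Otherwise, if there are $B\subsetneq A$ with $\mathrm{val}^n(A)>\mathrm{val}^n(B)+|A\setminus B|$, choose one and set $\mathrm{val}^{n+1}(A)=\mathrm{val}^n(B)+|A\setminus B|$, others unchanged. (iv) Otherwise $\mathrm{val}^{n+1}=\mathrm{val}^n$. When the sequence becomes stationary, the stationary function is denoted $v_{\mathcal{X}}$. *)

theory Defs
  imports Main
begin

text \<open>Ground set [d] = {1..d}. Set functions are modelled as functions nat set => int;
  the refinement procedure only ever changes values on subsets of [d].\<close>

definition proper_seq :: "nat set set \<Rightarrow> nat set list \<Rightarrow> bool" where
  "proper_seq \<X> S \<longleftrightarrow> set S \<subseteq> \<X> \<and>
     (\<forall>i. 1 \<le> i \<and> i < length S \<longrightarrow> \<not> (S ! i \<subseteq> \<Union> (set (take i S))))"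

definition val_seq :: "nat set \<Rightarrow> nat set list \<Rightarrow> int" where
  "val_seq F S = int (card (F \<union> \<Union> (set S))) - int (length S)"

definition valX :: "nat set set \<Rightarrow> nat set \<Rightarrow> int" where
  "valX \<X> F = Min {val_seq F S | S. proper_seq \<X> S}"

definition cond_i :: "nat \<Rightarrow> nat set set \<Rightarrow> (nat set \<Rightarrow> int) \<Rightarrow> bool" where
  "cond_i d \<X> f \<longleftrightarrow> (\<exists>A B x. A \<subseteq> {1..d} \<and> B \<subseteq> {1..d} \<and> x \<in> \<X> \<and> A \<inter> B \<subseteq> x \<and>
       f (A \<union> B) > f A + f B - min (int (card (A \<inter> B))) (int (card x) - 1))"

definition cond_ii :: "nat \<Rightarrow> (nat set \<Rightarrow> int) \<Rightarrow> bool" where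
  "cond_ii d f \<longleftrightarrow> (\<exists>A B. B \<subseteq> {1..d} \<and> A \<subset> B \<and> f A > f B)"

definition cond_iii :: "nat \<Rightarrow> (nat set \<Rightarrow> int) \<Rightarrow> bool" where
  "cond_iii d f \<longleftrightarrow> (\<exists>A B. A \<subseteq> {1..d} \<and> B \<subset> A \<and> f A > f B + int (card (A - B)))"

definition refine_step :: "nat \<Rightarrow> nat set set \<Rightarrow> (nat set \<Rightarrow> int) \<Rightarrow> (nat set \<Rightarrow> int) \<Rightarrow> bool" where
  "refine_step d \<X> f g \<longleftrightarrow>
     (if cond_i d \<X> f then
        (\<exists>A B x. A \<subseteq> {1..d} \<and> B \<subseteq> {1..d} \<and> x \<in> \<X> \<and> A \<inter> B \<subseteq> x \<and>
           f (A \<union> B) > f A + f B - min (int (card (A \<inter> B))) (int (card x) - 1) \<and>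
           g = f (A \<union> B := f A + f B - min (int (card (A \<inter> B))) (int (card x) - 1)))
      else if cond_ii d f then
        (\<exists>A B. B \<subseteq> {1..d} \<and> A \<subset> B \<and> f A > f B \<and> g = f (A := f B))
      else if cond_iii d f then
        (\<exists>A B. A \<subseteq> {1..d} \<and> B \<subset> A \<and> f A > f B + int (card (A - B)) \<and>
           g = f (A := f B + int (card (A - B))))
      else g = f)"

definition refine_run :: "nat \<Rightarrow> nat set set \<Rightarrow> (nat \<Rightarrow> nat set \<Rightarrow> int) \<Rightarrow> bool" where
  "refine_run d \<X> v \<longleftrightarrow> v 1 = valX \<X> \<and> (\<forall>n\<ge>1. refine_step d \<X> (v n) (v (Suc n)))"

end

theory Submission
  imports Defs
begin

text \<open>Every step of the refinement procedure only lowers values, and the value it writes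
  is an upper bound that every function satisfying none of the conditions (i)--(iii) already
  respects. Hence such a closed function lying below \<open>val\<^sub>\<X>\<close> stays below every
  \<open>val\<^sup>n\<close>. A stationary \<open>val\<^sup>n\<close> is itself closed and below \<open>val\<^sub>\<X>\<close>, so it is the
  greatest closed function below \<open>val\<^sub>\<X>\<close>, which does not depend on any choices.\<close>

definition refine_closed :: "nat \<Rightarrow> nat set set \<Rightarrow> (nat set \<Rightarrow> int) \<Rightarrow> bool" where
  "refine_closed d \<X> f \<longleftrightarrow> \<not> cond_i d \<X> f \<and> \<not> cond_ii d f \<and> \<not> cond_iii d f"

lemma refine_closedD:
  assumes "refine_closed d \<X> f"
  shows refine_closed_union: "\<lbrakk>A \<subseteq> {1..d}; B \<subseteq> {1..d}; x \<in> \<X>; A \<inter> B \<subseteq> x\<rbrakk> \<Longrightarrow>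
      f (A \<union> B) \<le> f A + f B - min (int (card (A \<inter> B))) (int (card x) - 1)"
    and refine_closed_mono: "\<lbrakk>B \<subseteq> {1..d}; A \<subset> B\<rbrakk> \<Longrightarrow> f A \<le> f B"
    and refine_closed_card: "\<lbrakk>A \<subseteq> {1..d}; B \<subset> A\<rbrakk> \<Longrightarrow> f A \<le> f B + int (card (A - B))"
  using assms unfolding refine_closed_def cond_i_def cond_ii_def cond_iii_def by (meson not_le)+

lemma refine_step_cases:
  assumes "refine_step d \<X> f f'"
  obtains (union) A B x where "A \<subseteq> {1..d}" "B \<subseteq> {1..d}" "x \<in> \<X>" "A \<inter> B \<subseteq> x"
      "f' = f(A \<union> B := f A + f B - min (int (card (A \<inter> B))) (int (card x) - 1))"
    | (mono) A B where "B \<subseteq> {1..d}" "A \<subset> B" "f' = f(A := f B)"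
    | (card) A B where "A \<subseteq> {1..d}" "B \<subset> A" "f' = f(A := f B + int (card (A - B)))"
    | (idle) "f' = f"
  using assms unfolding refine_step_def
  by (simp split: if_splits; elim exE conjE; (rule that; assumption)?)

lemma refine_step_le: "refine_step d \<X> f g \<Longrightarrow> g \<le> f"
  unfolding refine_step_def le_fun_def by (auto split: if_splits)

lemma refine_step_self_closed:
  assumes "refine_step d \<X> f f"
  shows "refine_closed d \<X> f"
proof -
  have no_decrease: "f = f(A := c) \<Longrightarrow> \<not> c < f A" for A c
    by (metis fun_upd_same less_irrefl)
  with assms show ?thesis
    unfolding refine_step_def refine_closed_def by (auto split: if_splits)
qed

lemma refine_step_preserves_closed_lower_bound:
  assumes step: "refine_step d \<X> f f'" and closed: "refine_closed d \<X> g" and "g \<le> f"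
  shows "g \<le> f'"
proof -
  have upd: "g T \<le> c \<Longrightarrow> g \<le> f(T := c)" for T c
    using \<open>g \<le> f\<close> by (simp add: le_fun_def)
  have le: "g S \<le> f S" for S
    using \<open>g \<le> f\<close> by (rule le_funD)
  from step show ?thesis
  proof (cases rule: refine_step_cases)
    case (union A B x)
    with refine_closed_union[OF closed, of A B x] le[of A] le[of B] show ?thesis
      by (auto intro: upd)
  next
    case (mono A B)
    with refine_closed_mono[OF closed, of B A] le[of B] show ?thesis
      by (auto intro: upd)
  next
    case (card A B)
    with refine_closed_card[OF closed, of A B] le[of B] show ?thesis
      by (auto intro: upd)
  next
    case idle
    with \<open>g \<le> f\<close> show ?thesis by simp
  qed
qed

lemma refine_run_le_valX:
  assumes "refine_run d \<X> v" and "k \<ge> 1"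
  shows "v k \<le> valX \<X>"
  using \<open>k \<ge> 1\<close>
proof (induction k rule: nat_induct_at_least)
  case base
  with assms(1) show ?case by (simp add: refine_run_def)
next
  case (Suc k)
  with assms(1) show ?case
    unfolding refine_run_def by (meson order_trans refine_step_le)
qed

lemma refine_run_ge_closed:
  assumes "refine_run d \<X> v" and "k \<ge> 1"
    and "refine_closed d \<X> g" and "g \<le> valX \<X>"
  shows "g \<le> v k"
  using \<open>k \<ge> 1\<close>
proof (induction k rule: nat_induct_at_least)
  case base
  with assms(1,4) show ?case by (simp add: refine_run_def)
next
  case (Suc k)
  with assms(1,3) show ?case
    unfolding refine_run_def by (meson refine_step_preserves_closed_lower_bound)
qed

lemma refine_run_stationary_greatest:
  assumes run: "refine_run d \<X> v" and "n \<ge> 1" and "v (Suc n) = v n"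
  shows "refine_closed d \<X> (v n)" and "v n \<le> valX \<X>"
    and "\<And>g. \<lbrakk>refine_closed d \<X> g; g \<le> valX \<X>\<rbrakk> \<Longrightarrow> g \<le> v n"
proof -
  show "refine_closed d \<X> (v n)"
    using assms unfolding refine_run_def by (metis refine_step_self_closed)
  show "v n \<le> valX \<X>"
    using refine_run_le_valX[OF run \<open>n \<ge> 1\<close>] .
  show "\<And>g. \<lbrakk>refine_closed d \<X> g; g \<le> valX \<X>\<rbrakk> \<Longrightarrow> g \<le> v n"
    using refine_run_ge_closed[OF run \<open>n \<ge> 1\<close>] .
qed

theorem mainTheorem16:
  fixes d :: nat and \<X> :: "nat set set"
    and v w :: "nat \<Rightarrow> nat set \<Rightarrow> int" and n m :: nat
  assumes "\<X> \<subseteq> Pow {1..d}"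
    and "refine_run d \<X> v" and "refine_run d \<X> w"
    and "n \<ge> 1" and "v (Suc n) = v n"
    and "m \<ge> 1" and "w (Suc m) = w m"
  shows "v n = w m"
proof (rule order_antisym)
  note v_greatest = refine_run_stationary_greatest[OF assms(2,4,5)]
  note w_greatest = refine_run_stationary_greatest[OF assms(3,6,7)]
  show "v n \<le> w m" using w_greatest(3)[OF v_greatest(1,2)] .
  show "w m \<le> v n" using v_greatest(3)[OF w_greatest(1,2)] .
qed

end
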